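(* Let $(R,+,\times)$ be a finite ring with identity $1$, of order $n$, and let $G$ be a subgroup of the multiplicative group $R^\times$ of invertible elements of $R$, with $k=|G|$. Let $f_G$ be the coset index function induced by $G$. If $$(G-1)\setminus\{0\}\subset R^\times,\qquad\text{where } G-1=\{g-1\mid g\in G\},$$ then $f_G$ is an $\left(n,\frac{n-1}{k}+1,k-1\right)$ zero-difference balanced function from $(R,+)$ to $\mathbb{Z}_m$, where $m=\frac{n-1}{k}+1$.
   Context: For a subgroup $G$ of $R^\times$ and $r\in R$, the coset $rG=\{rg\mid g\in G\}$; the sets $rG$ ($r\in R$) form a partition $D_G$ of $R$. The coset index function induced by $G$ is $f_G(x)=h_G(C_x)$, where $C_x\in D_G$ is the coset containing $x$ and $h_G:D_G\to\mathbb{Z}_{|D_G|}$ is a fixed bijection. Definition: for finite abelian groups $A,B$, a function $f:A\to B$ is an $(n,m,\lambda)$ zero-difference balanced function (ZDBF) if $n=|A|$, $m=|f(A)|$, and for every nonzero $a\in A$, $|\{x\in A\mid f(x+a)-f(x)=0\}|=\lambda$. *)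

theory Defs
  imports Main
begin

definition ring_units :: "'a::ring_1 set" where
  "ring_units = {u. \<exists>v. u * v = 1 \<and> v * u = 1}"

definition subgroup_of_units :: "'a::ring_1 set \<Rightarrow> bool" where
  "subgroup_of_units G \<longleftrightarrow> G \<subseteq> ring_units \<and> 1 \<in> G \<and>
     (\<forall>a\<in>G. \<forall>b\<in>G. a * b \<in> G) \<and> (\<forall>a\<in>G. \<exists>b\<in>G. a * b = 1 \<and> b * a = 1)"

definition coset :: "'a::ring_1 \<Rightarrow> 'a set \<Rightarrow> 'a set" where
  "coset r G = (\<lambda>g. r * g) ` G"

definition coset_partition :: "'a::ring_1 set \<Rightarrow> 'a set set" where
  "coset_partition G = range (\<lambda>r. coset r G)"

definition coset_index_fun :: "('a set \<Rightarrow> int) \<Rightarrow> 'a::ring_1 set \<Rightarrow> 'a \<Rightarrow> int" where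
  "coset_index_fun h G x = h (coset x G)"

text \<open>(n,m,lambda) zero-difference balanced function from a finite abelian group A
  (the additive group of the finite type 'a) to Z_M, elements of Z_M represented by
  {0..<M} with subtraction modulo M.\<close>
definition zdbf_Zmod :: "('a::{finite,ab_group_add} \<Rightarrow> int) \<Rightarrow> int \<Rightarrow> nat \<Rightarrow> nat \<Rightarrow> nat \<Rightarrow> bool" where
  "zdbf_Zmod f M n m l \<longleftrightarrow> (\<forall>x. f x \<in> {0..<M}) \<and> n = card (UNIV :: 'a set) \<and> m = card (range f) \<and>
     (\<forall>a. a \<noteq> 0 \<longrightarrow> card {x. (f (x + a) - f x) mod M = 0} = l)"

end

theory Submission
  imports Defs
begin

text \<open>The hypothesis that every nonzero \<open>g - 1\<close> (\<open>g \<in> G\<close>) is a unit makes right multiplication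
  by \<open>G\<close> act freely on \<open>R - {0}\<close>: from \<open>r g = r g'\<close> one gets \<open>r (g g'\<^sup>-\<^sup>1 - 1) = 0\<close>. Hence the
  nonzero cosets all have \<open>k\<close> elements and, together with \<open>{0}\<close>, there are \<open>(n - 1)/k + 1\<close> of them.
  For \<open>a \<noteq> 0\<close>, \<open>f\<^sub>G(x + a) = f\<^sub>G(x)\<close> means \<open>x + a = x g\<close>, i.e. \<open>x (g - 1) = a\<close>, for some \<open>g \<in> G - {1}\<close>;
  each such \<open>g\<close> has exactly one solution \<open>x = a (g - 1)\<^sup>-\<^sup>1\<close>, and different \<open>g\<close> give different \<open>x\<close>
  by freeness, so there are exactly \<open>k - 1\<close> such \<open>x\<close>.\<close>

lemma subgroup_of_units_one: "subgroup_of_units G \<Longrightarrow> 1 \<in> G"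
  unfolding subgroup_of_units_def by blast

lemma coset_self_mem: "subgroup_of_units G \<Longrightarrow> x \<in> coset x G"
  unfolding coset_def by (force dest: subgroup_of_units_one)

lemma coset_zero: "subgroup_of_units G \<Longrightarrow> coset 0 G = {0}"
  unfolding coset_def by (auto dest: subgroup_of_units_one)

lemma coset_mult_right:
  fixes G :: "'a::ring_1 set"
  assumes G: "subgroup_of_units G" and g: "g \<in> G"
  shows "coset (y * g) G = coset y G"
proof
  show "coset (y * g) G \<subseteq> coset y G"
    using G g unfolding subgroup_of_units_def coset_def by (auto simp: mult.assoc)
next
  show "coset y G \<subseteq> coset (y * g) G"
  proof
    fix z assume "z \<in> coset y G"
    then obtain g' where g': "g' \<in> G" "z = y * g'" unfolding coset_def by auto
    obtain b where b: "b \<in> G" "g * b = 1"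
      using G g unfolding subgroup_of_units_def by blast
    have "b * g' \<in> G" using G b g' unfolding subgroup_of_units_def by blast
    moreover have "z = y * g * (b * g')"
      using g' b by (metis mult.assoc mult_1_left)
    ultimately show "z \<in> coset (y * g) G" unfolding coset_def by auto
  qed
qed

lemma coset_eq_iff_mem:
  fixes G :: "'a::ring_1 set"
  assumes "subgroup_of_units G"
  shows "coset x G = coset y G \<longleftrightarrow> x \<in> coset y G"
proof
  show "x \<in> coset y G" if "coset x G = coset y G"
    using that coset_self_mem[OF assms, of x] by simp
  show "coset x G = coset y G" if x: "x \<in> coset y G"
  proof -
    obtain g where "g \<in> G" "x = y * g"
      using x unfolding coset_def by auto
    then show ?thesis
      using coset_mult_right[OF assms] by simp
  qed
qed

lemma coset_disjoint:
  fixes G :: "'a::ring_1 set"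
  assumes "subgroup_of_units G" and "coset x G \<noteq> coset y G"
  shows "coset x G \<inter> coset y G = {}"
  using assms coset_eq_iff_mem[OF assms(1)] by blast

lemma zero_notin_coset:
  fixes G :: "'a::ring_1 set"
  assumes G: "subgroup_of_units G" and r: "r \<noteq> 0"
  shows "0 \<notin> coset r G"
proof
  assume "0 \<in> coset r G"
  then obtain g where g: "g \<in> G" "r * g = 0" unfolding coset_def by auto
  then obtain b where "g * b = 1" using G unfolding subgroup_of_units_def by blast
  then have "r = r * g * b" by (simp add: mult.assoc)
  with g r show False by simp
qed

lemma mult_left_cancel_subgroup:
  fixes G :: "'a::ring_1 set"
  assumes G: "subgroup_of_units G"
    and U: "\<forall>g\<in>G. g - 1 \<noteq> 0 \<longrightarrow> g - 1 \<in> ring_units"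
    and r: "r \<noteq> 0" and g: "g \<in> G" "g' \<in> G" and eq: "r * g = r * g'"
  shows "g = g'"
proof -
  obtain b where b: "b \<in> G" "g' * b = 1" "b * g' = 1"
    using G g unfolding subgroup_of_units_def by blast
  have gb: "g * b \<in> G" using G g b unfolding subgroup_of_units_def by blast
  have "r * (g * b - 1) = r * g * b - r"
    by (simp add: algebra_simps)
  also have "\<dots> = r * g' * b - r"
    using eq by simp
  also have "\<dots> = 0"
    using b by (simp add: mult.assoc)
  finally have "r * (g * b - 1) = 0" .
  moreover have "g * b - 1 \<notin> ring_units"
  proof
    assume "g * b - 1 \<in> ring_units"
    then obtain v where "(g * b - 1) * v = 1" unfolding ring_units_def by blast
    then have "r = r * (g * b - 1) * v" by (simp add: mult.assoc)
    with \<open>r * (g * b - 1) = 0\<close> r show False by simp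
  qed
  ultimately have "g * b = 1" using U gb by auto
  then have "g * b * g' = g'" by simp
  with b show "g = g'" by (simp add: mult.assoc)
qed

lemma card_coset:
  fixes G :: "'a::ring_1 set"
  assumes "subgroup_of_units G"
    and "\<forall>g\<in>G. g - 1 \<noteq> 0 \<longrightarrow> g - 1 \<in> ring_units"
    and "r \<noteq> 0"
  shows "card (coset r G) = card G"
  unfolding coset_def
  by (intro card_image inj_onI) (use assms mult_left_cancel_subgroup in blast)

lemma card_mult_card_nonzero_cosets:
  fixes G :: "'a::{ring_1,finite} set"
  assumes G: "subgroup_of_units G"
    and U: "\<forall>g\<in>G. g - 1 \<noteq> 0 \<longrightarrow> g - 1 \<in> ring_units"
  shows "card G * card ((\<lambda>r. coset r G) ` (- {0})) = card (UNIV :: 'a set) - 1"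
proof -
  let ?P = "(\<lambda>r. coset r G) ` (- {0})"
  have "\<Union>?P = - {0}"
    using zero_notin_coset[OF G] coset_self_mem[OF G] by blast
  moreover have "card G * card ?P = card (\<Union>?P)"
    by (rule card_partition)
      (use card_coset[OF G U] coset_disjoint[OF G] in auto)
  ultimately show ?thesis
    by (simp add: Compl_eq_Diff_UNIV card_Diff_singleton)
qed

lemma card_coset_partition:
  fixes G :: "'a::{ring_1,finite} set"
  assumes G: "subgroup_of_units G"
    and U: "\<forall>g\<in>G. g - 1 \<noteq> 0 \<longrightarrow> g - 1 \<in> ring_units"
  shows "card G dvd card (UNIV :: 'a set) - 1"
    and "card (coset_partition G) = (card (UNIV :: 'a set) - 1) div card G + 1"
proof -
  let ?P = "(\<lambda>r. coset r G) ` (- {0})"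
  note card_G = card_mult_card_nonzero_cosets[OF G U]
  show "card G dvd card (UNIV :: 'a set) - 1"
    using card_G by (metis dvd_triv_left)
  have "card G \<noteq> 0"
    using subgroup_of_units_one[OF G] by auto
  then have "(card (UNIV :: 'a set) - 1) div card G = card ?P"
    by (metis card_G nonzero_mult_div_cancel_left)
  moreover have "coset_partition G = insert {0} ?P"
    unfolding coset_partition_def using coset_zero[OF G] by (auto simp: image_iff)
  moreover have "{0} \<notin> ?P"
    using coset_self_mem[OF G] by (auto simp: image_iff)
  ultimately show "card (coset_partition G) = (card (UNIV :: 'a set) - 1) div card G + 1"
    by simp
qed

lemma card_solutions_mult_unit:
  fixes u :: "'a::ring_1"
  assumes "u \<in> ring_units"
  shows "card {x. x * u = a} = 1"
proof -
  obtain v where v: "u * v = 1" "v * u = 1"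
    using assms unfolding ring_units_def by blast
  have "x * u = a \<longleftrightarrow> x = a * v" for x
    using v by (metis mult.assoc mult_1_right)
  then show ?thesis by simp
qed

lemma card_shift_into_coset:
  fixes G :: "'a::{ring_1,finite} set"
  assumes G: "subgroup_of_units G"
    and U: "\<forall>g\<in>G. g - 1 \<noteq> 0 \<longrightarrow> g - 1 \<in> ring_units"
    and a: "a \<noteq> 0"
  shows "card {x. x + a \<in> coset x G} = card G - 1"
proof -
  define S where "S g = {x. x * (g - 1) = a}" for g
  have shift_iff: "x + a \<in> coset x G \<longleftrightarrow> (\<exists>g\<in>G - {1}. x \<in> S g)" for x
    using a unfolding coset_def S_def by (force simp: algebra_simps)
  have "{x. x + a \<in> coset x G} = (\<Union>g\<in>G - {1}. S g)"
    using shift_iff by blast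
  moreover have "S g \<inter> S g' = {}" if g: "g \<in> G" "g' \<in> G" "g \<noteq> g'" for g g'
  proof -
    have "x * g \<noteq> x * g'" if "x \<in> S g" for x
    proof -
      have "x \<noteq> 0"
        using that a by (auto simp: S_def)
      then show ?thesis
        using mult_left_cancel_subgroup[OF G U _ g(1,2)] g(3) by blast
    qed
    moreover have "x * g = x + a" if "x \<in> S g" for x g
      using that by (simp add: S_def algebra_simps)
    ultimately show ?thesis
      by (metis disjoint_iff)
  qed
  moreover have "card (S g) = 1" if "g \<in> G - {1}" for g
    unfolding S_def using U that by (intro card_solutions_mult_unit) auto
  ultimately have "card {x. x + a \<in> coset x G} = card (G - {1})"
    by (simp add: card_UN_disjoint)
  then show ?thesis
    using subgroup_of_units_one[OF G] by simp
qed

lemma mod_diff_eq_0_iff_eq: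
  fixes a b M :: int
  assumes "a \<in> {0..<M}" "b \<in> {0..<M}"
  shows "(a - b) mod M = 0 \<longleftrightarrow> a = b"
  using assms by (auto simp: mod_eq_0_iff_dvd mod_eq_dvd_iff [symmetric] mod_pos_pos_trivial)

context
  fixes G :: "'a::ring_1 set" and h :: "'a set \<Rightarrow> int"
  assumes h: "bij_betw h (coset_partition G) {0..<int (card (coset_partition G))}"
begin

lemma coset_index_fun_mem: "coset_index_fun h G x \<in> {0..<int (card (coset_partition G))}"
  using h unfolding coset_index_fun_def coset_partition_def bij_betw_def by blast

lemma card_range_coset_index_fun: "card (range (coset_index_fun h G)) = card (coset_partition G)"
proof -
  have "range (coset_index_fun h G) = h ` coset_partition G"
    unfolding coset_index_fun_def coset_partition_def by auto
  then show ?thesis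
    using h by (simp add: bij_betw_def card_image)
qed

lemma coset_index_fun_diff_mod_eq_0_iff:
  assumes G: "subgroup_of_units G"
  shows "(coset_index_fun h G (x + a) - coset_index_fun h G x) mod int (card (coset_partition G)) = 0
    \<longleftrightarrow> x + a \<in> coset x G"
proof -
  have "inj_on h (coset_partition G)"
    using h by (simp add: bij_betw_def)
  moreover have "coset y G \<in> coset_partition G" for y
    unfolding coset_partition_def by blast
  ultimately show ?thesis
    unfolding mod_diff_eq_0_iff_eq[OF coset_index_fun_mem coset_index_fun_mem]
    by (simp add: coset_index_fun_def inj_on_eq_iff coset_eq_iff_mem[OF G])
qed

end

theorem corollary2p4:
  fixes G :: "'a::{ring_1,finite} set" and h :: "'a set \<Rightarrow> int"
  assumes "subgroup_of_units G"
    and "bij_betw h (coset_partition G) {0..<int (card (coset_partition G))}"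
    and "\<forall>g\<in>G. g - 1 \<noteq> 0 \<longrightarrow> g - 1 \<in> ring_units"
  shows "card G dvd (card (UNIV :: 'a set) - 1) \<and>
    zdbf_Zmod (coset_index_fun h G) (int ((card (UNIV :: 'a set) - 1) div card G + 1))
      (card (UNIV :: 'a set)) ((card (UNIV :: 'a set) - 1) div card G + 1) (card G - 1)"
  using card_coset_partition[OF assms(1,3)]
    coset_index_fun_mem[OF assms(2)] card_range_coset_index_fun[OF assms(2)]
    coset_index_fun_diff_mod_eq_0_iff[OF assms(2,1)] card_shift_into_coset[OF assms(1,3)]
  unfolding zdbf_Zmod_def by simp

end
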